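(* Let $p,d\in C^{2}([0,\infty),\mathbb{R})$, $b\in C^2([0,\infty),\mathbb{C})$, $c\in C^1([0,\infty),\mathbb{C})$, $q\in C([0,\infty),\mathbb{R})$ with $p>0$ on $[0,\infty)$, and assume: (B1) the (possibly improper) limit $d_\infty:=\lim_{t\to\infty}d(t)\in\mathbb{R}\cup\{\pm\infty\}$ exists; (B2) there are $\beta,\gamma>0$ with $|b(t)|\le\beta(|d(t)|+1)$, $|c(t)|\le\gamma(|d(t)|+1)$ for all $t\ge0$; (C1) for $\lambda\in\mathbb{R}\setminus(\overline{\Delta([0,\infty))}\cup\{d_\infty\})$ the limits $\lim_{t\to\infty}\pi(t,\lambda)$ and $\lim_{t\to\infty}\frac{\partial}{\partial t}\pi(t,\lambda)$ exist and are finite, and $\lim_{t\to\infty}\pi(t,\lambda)\neq0$ for some such $\lambda$; (C2) for $\lambda\in\mathbb{R}\setminus\{d_\infty\}$ the limits $\lim_{t\to\infty}\frac{\overline{b}c}{d-\lambda}(t)$ and $\lim_{t\to\infty}\frac{\partial}{\partial t}\frac{\overline{b}c}{d-\lambda}(t)$ exist and are finite; (C3) for $\lambda\in\mathbb{R}\setminus\{d_\infty\}$ the limit $\lim_{t\to\infty}\big(q-\lambda-\frac{|c|^2}{d-\lambda}\big)(t)$ exists and is finite. Let $\sigma^{\mathrm s}:=\{\lambda\in\mathbb{R}\setminus(\overline{\Delta([0,\infty))}\cup\{d_\infty\}):\ (\lim_{t\to\infty}\frac{\rho(t,\lambda)}{\pi(t,\lambda)})^2-4\lim_{t\to\infty}\frac{\kappa(t,\lambda)}{\pi(t,\lambda)}\ge0\}$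 and $E:=\overline{\Delta([0,\infty))}\cup\{d_\infty\}$. Then there exist $s_-,s_+,s\in\mathbb{R}$ with $s_-\le s_+\le s$ such that: (i) if $d_\infty\in\mathbb{R}$: when $\lim_{t\to\infty}p(t)>0$, either $\sigma^{\mathrm s}=([s_-,s_+]\cup[s,+\infty))\setminus E$ or $\sigma^{\mathrm s}=[s,+\infty)\setminus E$; when $\lim_{t\to\infty}p(t)=0$, $\sigma^{\mathrm s}=((-\infty,s_-]\cup[s_+,+\infty))\setminus E$; (ii) if $d_\infty=+\infty$: $\sigma^{\mathrm s}=[s_-,s_+]\setminus\overline{\Delta([0,\infty))}$ if $\lim_{t\to\infty}\frac{|b|^2}{d^2}>0$; $\sigma^{\mathrm s}=[s,+\infty)\setminus\overline{\Delta([0,\infty))}$ if $\lim\frac{|b|^2}{d^2}=0$ and $\lim_{t\to\infty}(p-\frac{|b|^2}{d})>0$; $\sigma^{\mathrm s}=(-\infty,s]\setminus\overline{\Delta([0,\infty))}$ if $\lim\frac{|b|^2}{d^2}=0$ and $\lim_{t\to\infty}(p-\frac{|b|^2}{d})<0$; (iii) if $d_\infty=-\infty$: $\sigma^{\mathrm s}=[s_-,s_+]\setminus\overline{\Delta([0,\infty))}$ if $\lim_{t\to\infty}\frac{|b|^2}{d^2}>0$; $\sigma^{\mathrm s}=[s,+\infty)\setminus\overline{\Delta([0,\infty))}$ if $\lim_{t\to\infty}\frac{|b|^2}{d^2}=0$.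
   Context: Notation: $\Delta(t):=d(t)-|b(t)|^2/p(t)$. For $t$ with $d(t)\ne\lambda$: $\pi(t,\lambda):=p(t)-\frac{|b(t)|^2}{d(t)-\lambda}$, $\rho(t,\lambda):=-\frac{2\operatorname{Im}(b(t)\overline{c(t)})}{d(t)-\lambda}+i\frac{\partial}{\partial t}\pi(t,\lambda)$, $\kappa(t,\lambda):=q(t)-\lambda-\frac{|c(t)|^2}{d(t)-\lambda}+\frac{\partial}{\partial t}\Big(\frac{\overline{b(t)}c(t)}{d(t)-\lambda}\Big)$. The limits of $p$, $|b|^2/d^2$, $p-|b|^2/d$ appearing in the case distinctions exist in the respective cases under the hypotheses. The set $\sigma^{\mathrm s}$ is the singular part $\sigma^{\mathrm s}_{\mathrm{ess}}(\mathcal{A})$ of the essential spectrum of every closed symmetric extension $\mathcal{A}$ of the operator $\mathcal{A}_0$ in $L^2(0,\infty)^2$, $\mathcal{A}_0\binom{y_1}{y_2}=\binom{-(py_1')'+qy_1-(\overline{b}y_2)'+\overline{c}y_2}{by_1'+cy_1+dy_2}$ on $C_0^2((0,\infty))\oplus C_0^1((0,\infty))$. *)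

theory Defs
  imports "HOL-Analysis.Analysis"
begin

text \<open>k-fold continuous differentiability on a set S (one-sided derivatives at boundary
  points of S, via derivatives within S).\<close>
definition C1_on :: "real set \<Rightarrow> (real \<Rightarrow> 'a::real_normed_vector) \<Rightarrow> bool" where
  "C1_on S f \<longleftrightarrow> (\<exists>f'. (\<forall>x\<in>S. (f has_vector_derivative f' x) (at x within S))
                         \<and> continuous_on S f')"

definition C2_on :: "real set \<Rightarrow> (real \<Rightarrow> 'a::real_normed_vector) \<Rightarrow> bool" where
  "C2_on S f \<longleftrightarrow> (\<exists>f' f''. (\<forall>x\<in>S. (f has_vector_derivative f' x) (at x within S))
                         \<and> (\<forall>x\<in>S. (f' has_vector_derivative f'' x) (at x within S))
                         \<and> continuous_on S f'')"

definition Delta :: "(real \<Rightarrow> real) \<Rightarrow> (real \<Rightarrow> complex) \<Rightarrow> (real \<Rightarrow> real) \<Rightarrow> real \<Rightarrow> real" where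
  "Delta p b d t = d t - (cmod (b t))\<^sup>2 / p t"

definition pi_fn :: "(real \<Rightarrow> real) \<Rightarrow> (real \<Rightarrow> complex) \<Rightarrow> (real \<Rightarrow> real) \<Rightarrow> real \<Rightarrow> real \<Rightarrow> real" where
  "pi_fn p b d t l = p t - (cmod (b t))\<^sup>2 / (d t - l)"

definition rho_fn :: "(real \<Rightarrow> real) \<Rightarrow> (real \<Rightarrow> complex) \<Rightarrow> (real \<Rightarrow> complex) \<Rightarrow> (real \<Rightarrow> real)
                      \<Rightarrow> real \<Rightarrow> real \<Rightarrow> complex" where
  "rho_fn p b c d t l = complex_of_real (- 2 * Im (b t * cnj (c t)) / (d t - l))
       + \<i> * complex_of_real (deriv (\<lambda>s. pi_fn p b d s l) t)"

definition kappa_fn :: "(real \<Rightarrow> real) \<Rightarrow> (real \<Rightarrow> complex) \<Rightarrow> (real \<Rightarrow> complex) \<Rightarrow> (real \<Rightarrow> real)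
                      \<Rightarrow> real \<Rightarrow> real \<Rightarrow> complex" where
  "kappa_fn q b c d t l = complex_of_real (q t - l - (cmod (c t))\<^sup>2 / (d t - l))
       + vector_derivative (\<lambda>s. cnj (b s) * c s / complex_of_real (d s - l)) (at t)"

definition sigma_s :: "(real \<Rightarrow> real) \<Rightarrow> (real \<Rightarrow> real) \<Rightarrow> (real \<Rightarrow> complex) \<Rightarrow> (real \<Rightarrow> complex)
                      \<Rightarrow> (real \<Rightarrow> real) \<Rightarrow> ereal \<Rightarrow> real set" where
  "sigma_s p q b c d dinf = {l. l \<notin> closure (Delta p b d ` {0..}) \<and> ereal l \<noteq> dinf \<and>
      (\<exists>L1 L2. ((\<lambda>t. rho_fn p b c d t l / complex_of_real (pi_fn p b d t l)) \<longlongrightarrow> L1) at_top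
             \<and> ((\<lambda>t. kappa_fn q b c d t l / complex_of_real (pi_fn p b d t l)) \<longlongrightarrow> L2) at_top
             \<and> Im (L1\<^sup>2 - 4 * L2) = 0 \<and> Re (L1\<^sup>2 - 4 * L2) \<ge> 0)}"

end

theory Submission
  imports Defs "HOL-Real_Asymp.Real_Asymp" "HOL-Library.Quadratic_Discriminant"
begin

text \<open>Fix l outside the closure of the range of Delta and different from d_\<infinity>, and let P, A and Q be
  the limits of pi(t, l), of -2 Im (b conj c) / (d - l) and of q - l - |c|^2 / (d - l).
  The derivative terms of rho and kappa tend to 0, because the functions they differentiate
  converge; hence rho/pi and kappa/pi tend to the real numbers A/P and Q/P, and l lies in the
  set iff A^2 - 4 Q P \<ge> 0. Here P \<noteq> 0, since pi(t, l) \<rightarrow> 0 would force Delta(t) \<rightarrow> l.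

  The hypotheses make P, A and Q explicit in l. If d_\<infinity> = D is finite, then p, |b|^2,
  conj b c, |c|^2 and q converge, and (D - l)^2 (A^2 - 4 Q P) / 4 is a cubic in l with
  leading coefficient lim p, or a quadratic with positive leading coefficient if lim p = 0.
  If d_\<infinity> = \<plusminus>\<infinity>, then P = P0 + L (l0 - l) with L = lim |b|^2 / d^2, A is constant and Q is
  affine with negative slope, so A^2 - 4 Q P is a concave quadratic (nonnegative at the zero of P)
  if L > 0 and affine if L = 0. The shape of the set is that of the nonnegativity set of
  this polynomial.\<close>

lemma quadratic_eq_product_of_roots:
  fixes a b c x :: real
  assumes "a \<noteq> 0" and "0 \<le> discrim a b c"
  shows "a * x\<^sup>2 + b * x + c =
    a * (x - (- b - sqrt (discrim a b c)) / (2 * a)) * (x - (- b + sqrt (discrim a b c)) / (2 * a))"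
proof -
  define s where "s = sqrt (discrim a b c)"
  have "s\<^sup>2 = b\<^sup>2 - 4 * a * c"
    using assms(2) by (simp add: s_def discrim_def)
  then show ?thesis
    using assms(1) unfolding s_def[symmetric] by (simp add: field_simps power2_eq_square) (metis distrib_left)
qed

lemma quadratic_pos_if_discrim_neg:
  fixes a b c x :: real
  assumes "0 < a" and "discrim a b c < 0"
  shows "0 < a * x\<^sup>2 + b * x + c"
proof -
  have "4 * a * (a * x\<^sup>2 + b * x + c) = (2 * a * x + b)\<^sup>2 - discrim a b c"
    by (simp add: discrim_def algebra_simps power2_eq_square)
  also have "\<dots> > 0"
    using assms(2) by (smt (verit) zero_le_power2)
  finally show ?thesis
    using assms(1) by (simp add: zero_less_mult_iff)
qed

lemma nonneg_set_quadratic_pos: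
  fixes a b c :: real
  assumes "0 < a"
  shows "\<exists>sm sp. sm \<le> sp \<and> {x. 0 \<le> a * x\<^sup>2 + b * x + c} = {..sm} \<union> {sp..}"
proof (cases "0 \<le> discrim a b c")
  case True
  define r1 r2 where "r1 = (- b - sqrt (discrim a b c)) / (2 * a)"
    and "r2 = (- b + sqrt (discrim a b c)) / (2 * a)"
  have "r1 \<le> r2"
    unfolding r1_def r2_def using assms True by (intro divide_right_mono) auto
  moreover have "0 \<le> a * x\<^sup>2 + b * x + c \<longleftrightarrow> x \<le> r1 \<or> r2 \<le> x" for x
    using quadratic_eq_product_of_roots[OF _ True, of x] assms \<open>r1 \<le> r2\<close>
    unfolding r1_def[symmetric] r2_def[symmetric]
    by (auto simp: zero_le_mult_iff mult.assoc)
  ultimately show ?thesis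
    by blast
next
  case False
  then have "{x. 0 \<le> a * x\<^sup>2 + b * x + c} = {..0} \<union> {0..}"
    using quadratic_pos_if_discrim_neg[OF assms] by (auto intro: less_imp_le)
  then show ?thesis
    by blast
qed

lemma nonneg_set_quadratic_neg:
  fixes a b c x0 :: real
  assumes "a < 0" and "0 \<le> a * x0\<^sup>2 + b * x0 + c"
  shows "\<exists>sm sp. sm \<le> sp \<and> {x. 0 \<le> a * x\<^sup>2 + b * x + c} = {sm..sp}"
proof -
  have discrim: "0 \<le> discrim a b c"
  proof (rule ccontr)
    assume "\<not> 0 \<le> discrim a b c"
    then have "0 < (- a) * x0\<^sup>2 + (- b) * x0 + (- c)"
      using assms(1) by (intro quadratic_pos_if_discrim_neg) (simp_all add: discrim_def)
    then show False
      using assms(2) by linarith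
  qed
  define r1 r2 where "r1 = (- b + sqrt (discrim a b c)) / (2 * a)"
    and "r2 = (- b - sqrt (discrim a b c)) / (2 * a)"
  have "r1 \<le> r2"
    unfolding r1_def r2_def using assms discrim by (intro divide_right_mono_neg) auto
  have "0 \<le> a * x\<^sup>2 + b * x + c \<longleftrightarrow> r1 \<le> x \<and> x \<le> r2" for x
  proof -
    have "a * x\<^sup>2 + b * x + c = a * ((x - r1) * (x - r2))"
      using quadratic_eq_product_of_roots[OF _ discrim, of x] assms(1)
      unfolding r1_def[symmetric] r2_def[symmetric] by (simp add: mult_ac)
    then have "0 \<le> a * x\<^sup>2 + b * x + c \<longleftrightarrow> (x - r1) * (x - r2) \<le> 0"
      using assms(1) by (simp add: zero_le_mult_iff)
    also have "\<dots> \<longleftrightarrow> r1 \<le> x \<and> x \<le> r2"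
      using \<open>r1 \<le> r2\<close> by (auto simp: mult_le_0_iff)
    finally show ?thesis .
  qed
  then have "{x. 0 \<le> a * x\<^sup>2 + b * x + c} = {r1..r2}"
    by (simp add: set_eq_iff)
  then show ?thesis
    using \<open>r1 \<le> r2\<close> by blast
qed

lemma nonneg_set_linear:
  fixes k m :: real
  assumes "k \<noteq> 0"
  shows "{x. 0 \<le> k * x + m} = (if 0 < k then {- m / k..} else {..- m / k})"
proof (cases "0 < k")
  case True
  then show ?thesis
    by (auto simp: field_simps)
next
  case False
  with assms have "k < 0"
    by simp
  then show ?thesis
    by (auto simp: field_simps)
qed

lemma cubic_has_real_root:
  fixes a b c e :: real
  assumes "0 < a"
  shows "\<exists>r. a * r ^ 3 + b * r\<^sup>2 + c * r + e = 0"
proof -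
  define f where "f x = a * x ^ 3 + b * x\<^sup>2 + c * x + e" for x
  have "filterlim f at_top at_top" and "filterlim f at_bot at_bot"
    unfolding f_def using assms by real_asymp+
  then have "\<forall>\<^sub>F x in at_top. 0 \<le> f x" and "\<forall>\<^sub>F x in at_bot. f x \<le> 0"
    by (simp_all add: filterlim_at_top filterlim_at_bot)
  then obtain x1 x2 where "\<And>x. x1 \<le> x \<Longrightarrow> 0 \<le> f x" and "\<And>x. x \<le> x2 \<Longrightarrow> f x \<le> 0"
    by (auto simp: eventually_at_top_linorder eventually_at_bot_linorder)
  then have "min x1 x2 \<le> max x1 x2" "0 \<le> f (max x1 x2)" "f (min x1 x2) \<le> 0"
    by auto
  moreover have "continuous_on {min x1 x2..max x1 x2} f"
    unfolding f_def by (intro continuous_intros)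
  ultimately show ?thesis
    using IVT'[of f "min x1 x2" 0 "max x1 x2"] unfolding f_def by force
qed

lemma nonneg_iff_cubic_roots:
  fixes u v w x :: real
  assumes "u \<le> v" and "v \<le> w"
  shows "0 \<le> (x - u) * (x - v) * (x - w) \<longleftrightarrow> u \<le> x \<and> x \<le> v \<or> w \<le> x"
  using assms by (auto simp: zero_le_mult_iff mult_le_0_iff)

lemma cubic_roots_sorted:
  fixes r r1 r2 :: real
  assumes "r1 \<le> r2"
  obtains u v w where "u \<le> v" and "v \<le> w"
    and "\<And>x. (x - r) * (x - r1) * (x - r2) = (x - u) * (x - v) * (x - w)"
proof -
  consider "r \<le> r1" | "r1 \<le> r \<and> r \<le> r2" | "r2 \<le> r"
    by linarith
  then show thesis
  proof cases
    case 1
    then show thesis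
      using assms by (intro that[of r r1 r2]) simp_all
  next
    case 2
    then show thesis
      by (intro that[of r1 r r2]) (simp_all add: mult_ac)
  next
    case 3
    then show thesis
      using assms by (intro that[of r1 r2 r]) (simp_all add: mult_ac)
  qed
qed

lemma nonneg_set_linear_times_quadratic:
  fixes r \<beta> \<gamma> :: real
  shows "\<exists>sm sp s. sm \<le> sp \<and> sp \<le> s \<and>
    ({x. 0 \<le> (x - r) * (x\<^sup>2 + \<beta> * x + \<gamma>)} = {sm..sp} \<union> {s..} \<or>
     {x. 0 \<le> (x - r) * (x\<^sup>2 + \<beta> * x + \<gamma>)} = {s..})"
proof (cases "0 \<le> discrim 1 \<beta> \<gamma>")
  case False
  then have "0 < x\<^sup>2 + \<beta> * x + \<gamma>" for x
    using quadratic_pos_if_discrim_neg[of 1 \<beta> \<gamma> x] by simp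
  then have "{x. 0 \<le> (x - r) * (x\<^sup>2 + \<beta> * x + \<gamma>)} = {r..}"
    by (simp add: set_eq_iff zero_le_mult_iff) (meson less_le_not_le)
  then show ?thesis
    by blast
next
  case True
  define r1 r2 where "r1 = (- \<beta> - sqrt (discrim 1 \<beta> \<gamma>)) / 2"
    and "r2 = (- \<beta> + sqrt (discrim 1 \<beta> \<gamma>)) / 2"
  have "r1 \<le> r2"
    unfolding r1_def r2_def using True by simp
  have roots: "(x - r) * (x\<^sup>2 + \<beta> * x + \<gamma>) = (x - r) * (x - r1) * (x - r2)" for x
    using quadratic_eq_product_of_roots[OF _ True, of x] unfolding r1_def r2_def by simp
  obtain u v w where "u \<le> v" "v \<le> w"
    and "\<And>x. (x - r) * (x - r1) * (x - r2) = (x - u) * (x - v) * (x - w)"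
    using cubic_roots_sorted[OF \<open>r1 \<le> r2\<close>] by blast
  then have "{x. 0 \<le> (x - r) * (x\<^sup>2 + \<beta> * x + \<gamma>)} = {u..v} \<union> {w..}"
    by (simp add: set_eq_iff roots nonneg_iff_cubic_roots)
  then show ?thesis
    using \<open>u \<le> v\<close> \<open>v \<le> w\<close> by blast
qed

lemma nonneg_set_cubic:
  fixes a b c e :: real
  assumes "0 < a"
  shows "\<exists>sm sp s. sm \<le> sp \<and> sp \<le> s \<and>
    ({x. 0 \<le> a * x ^ 3 + b * x\<^sup>2 + c * x + e} = {sm..sp} \<union> {s..} \<or>
     {x. 0 \<le> a * x ^ 3 + b * x\<^sup>2 + c * x + e} = {s..})"
proof -
  obtain r where r: "a * r ^ 3 + b * r\<^sup>2 + c * r + e = 0"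
    using cubic_has_real_root[OF assms] by blast
  define \<beta> \<gamma> where "\<beta> = b / a + r" and "\<gamma> = c / a + r * (b / a + r)"
  have "a * x ^ 3 + b * x\<^sup>2 + c * x + e = a * ((x - r) * (x\<^sup>2 + \<beta> * x + \<gamma>))" for x
  proof -
    have e: "e = - (a * r ^ 3 + b * r\<^sup>2 + c * r)"
      using r by simp
    show ?thesis
      unfolding e \<beta>_def \<gamma>_def using assms
      by (simp add: field_simps power2_eq_square power3_eq_cube)
  qed
  then have "{x. 0 \<le> a * x ^ 3 + b * x\<^sup>2 + c * x + e} = {x. 0 \<le> (x - r) * (x\<^sup>2 + \<beta> * x + \<gamma>)}"
    using assms by (simp add: zero_le_mult_iff)
  then show ?thesis
    using nonneg_set_linear_times_quadratic[of r \<beta> \<gamma>] by (simp only:)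
qed

lemma tendsto_real_derivative_at_top_eq_0:
  fixes f f' :: "real \<Rightarrow> real"
  assumes "(f \<longlongrightarrow> A) at_top" and "(f' \<longlongrightarrow> M) at_top"
    and "\<forall>\<^sub>F t in at_top. (f has_real_derivative f' t) (at t)"
  shows "M = 0"
proof (rule ccontr)
  assume "M \<noteq> 0"
  have "\<forall>\<^sub>F t in at_top. \<bar>f' t - M\<bar> < \<bar>M\<bar> / 2 \<and> (f has_real_derivative f' t) (at t)"
    using tendstoD[OF assms(2), of "\<bar>M\<bar> / 2"] assms(3) \<open>M \<noteq> 0\<close>
    by (auto simp: dist_real_def elim: eventually_elim2)
  then obtain T where T: "\<And>t. T \<le> t \<Longrightarrow> \<bar>f' t - M\<bar> < \<bar>M\<bar> / 2 \<and> (f has_real_derivative f' t) (at t)"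
    by (auto simp: eventually_at_top_linorder)
  have "\<bar>M\<bar> / 2 \<le> \<bar>f (t + 1) - f t\<bar>" if "T \<le> t" for t
  proof -
    have "\<exists>z>t. z < t + 1 \<and> f (t + 1) - f t = (t + 1 - t) * f' z"
      by (rule MVT2) (use T that in auto)
    then obtain z where "t < z" "z < t + 1" "f (t + 1) - f t = f' z"
      by auto
    moreover have "\<bar>f' z - M\<bar> < \<bar>M\<bar> / 2"
      using T[of z] \<open>t < z\<close> that by simp
    moreover have "\<bar>M\<bar> - \<bar>f' z\<bar> \<le> \<bar>f' z - M\<bar>"
      by (metis abs_minus_commute abs_triangle_ineq2)
    ultimately show ?thesis
      by linarith
  qed
  then have "\<forall>\<^sub>F t in at_top. \<bar>M\<bar> / 2 \<le> \<bar>f (t + 1) - f t\<bar>"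
    by (auto simp: eventually_at_top_linorder)
  moreover have "filterlim (\<lambda>t::real. t + 1) at_top at_top"
    by real_asymp
  then have "((\<lambda>t. \<bar>f (t + 1) - f t\<bar>) \<longlongrightarrow> \<bar>A - A\<bar>) at_top"
    by (intro tendsto_intros filterlim_compose[OF assms(1)] assms(1))
  ultimately have "\<bar>M\<bar> / 2 \<le> \<bar>A - A\<bar>"
    using tendsto_lowerbound trivial_limit_at_top_linorder by blast
  then show False
    using \<open>M \<noteq> 0\<close> by simp
qed

lemma tendsto_vector_derivative_at_top_eq_0:
  fixes f f' :: "real \<Rightarrow> 'a::real_inner"
  assumes "(f \<longlongrightarrow> A) at_top" and "(f' \<longlongrightarrow> M) at_top"
    and "\<forall>\<^sub>F t in at_top. (f has_vector_derivative f' t) (at t)"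
  shows "M = 0"
proof -
  have "\<forall>\<^sub>F t in at_top. ((\<lambda>t. f t \<bullet> M) has_real_derivative f' t \<bullet> M) (at t)"
    using assms(3)
  proof eventually_elim
    case (elim t)
    then have "((\<lambda>t. f t \<bullet> M) has_derivative (\<lambda>h. (h *\<^sub>R f' t) \<bullet> M)) (at t)"
      unfolding has_vector_derivative_def by (rule has_derivative_inner_left)
    then show ?case
      by (simp add: has_field_derivative_def mult_commute_abs)
  qed
  moreover have "((\<lambda>t. f t \<bullet> M) \<longlongrightarrow> A \<bullet> M) at_top" and "((\<lambda>t. f' t \<bullet> M) \<longlongrightarrow> M \<bullet> M) at_top"
    by (intro tendsto_intros assms(1,2))+
  ultimately have "M \<bullet> M = 0"
    by (intro tendsto_real_derivative_at_top_eq_0)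
  then show ?thesis
    by simp
qed

lemma differentiable_at_if_vector_derivatives_on_atLeast:
  assumes "\<forall>x\<in>{a..}. (f has_vector_derivative f' x) (at x within {a..})" and "a < t"
  shows "f differentiable at t"
proof -
  have "at t within {a..} = at t"
    using assms(2) by (intro at_within_interior) simp
  then show ?thesis
    using assms by (metis atLeast_iff differentiableI_vector less_imp_le)
qed

lemma C1_on_differentiable_at:
  "C1_on {a..} f \<Longrightarrow> a < t \<Longrightarrow> f differentiable at t"
  unfolding C1_on_def by (metis differentiable_at_if_vector_derivatives_on_atLeast)

lemma C2_on_differentiable_at:
  "C2_on {a..} f \<Longrightarrow> a < t \<Longrightarrow> f differentiable at t"
  unfolding C2_on_def by (metis differentiable_at_if_vector_derivatives_on_atLeast)

lemma filterlim_at_infinity_if_ereal_tendsto_infinity: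
  fixes f :: "'a \<Rightarrow> real"
  assumes "((\<lambda>t. ereal (f t)) \<longlongrightarrow> L) F" and "L = \<infinity> \<or> L = - \<infinity>"
  shows "filterlim f at_infinity F"
proof -
  have "\<forall>\<^sub>F t in F. r \<le> \<bar>f t\<bar>" for r
  proof (cases "L = \<infinity>")
    case True
    then have "\<forall>\<^sub>F t in F. ereal r < ereal (f t)"
      using assms(1) by (simp add: tendsto_PInfty)
    then show ?thesis
      by eventually_elim simp
  next
    case False
    then have "\<forall>\<^sub>F t in F. ereal (f t) < ereal (- r)"
      using assms by (simp add: tendsto_MInfty)
    then show ?thesis
      by eventually_elim simp
  qed
  then show ?thesis
    by (simp add: filterlim_at_infinity[OF order_refl])
qed

lemma tendsto_shifted_quotient_at_infinity:
  fixes d :: "'a \<Rightarrow> real"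
  assumes "filterlim d at_infinity F"
  shows "((\<lambda>t. (d t - a) / (d t - l)) \<longlongrightarrow> 1) F"
proof -
  have "((\<lambda>t. inverse (d t)) \<longlongrightarrow> 0) F"
    using filterlim_compose[OF tendsto_inverse_0 assms] .
  then have "((\<lambda>t. (1 - a * inverse (d t)) / (1 - l * inverse (d t))) \<longlongrightarrow> (1 - a * 0) / (1 - l * 0)) F"
    by (intro tendsto_intros) simp_all
  moreover have "(1 - a * inverse x) / (1 - l * inverse x) = (x - a) / (x - l)" if "x \<noteq> 0" for x :: real
  proof -
    have "1 - a * inverse x = (x - a) / x" and "1 - l * inverse x = (x - l) / x"
      using that by (simp_all add: field_simps)
    then show ?thesis
      using that by simp
  qed
  then have "\<forall>\<^sub>F t in F. (1 - a * inverse (d t)) / (1 - l * inverse (d t)) = (d t - a) / (d t - l)"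
    using filterlim_at_infinity_imp_eventually_ne[OF assms, of 0] by (auto elim: eventually_mono)
  ultimately show ?thesis
    by (simp add: tendsto_cong)
qed

locale mixed_order_coefficients =
  fixes p d q :: "real \<Rightarrow> real" and b c :: "real \<Rightarrow> complex" and dinf :: ereal
  assumes p_differentiable: "\<And>t. 0 < t \<Longrightarrow> p differentiable at t"
    and d_differentiable: "\<And>t. 0 < t \<Longrightarrow> d differentiable at t"
    and b_differentiable: "\<And>t. 0 < t \<Longrightarrow> b differentiable at t"
    and c_differentiable: "\<And>t. 0 < t \<Longrightarrow> c differentiable at t"
    and p_pos: "\<And>t. 0 \<le> t \<Longrightarrow> 0 < p t"
    and B1: "((\<lambda>t. ereal (d t)) \<longlongrightarrow> dinf) at_top"
    and C1: "\<forall>l. l \<notin> closure (Delta p b d ` {0..}) \<and> ereal l \<noteq> dinf \<longrightarrow>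
               (\<exists>L. ((\<lambda>t. pi_fn p b d t l) \<longlongrightarrow> L) at_top) \<and>
               (\<exists>L. ((\<lambda>t. deriv (\<lambda>s. pi_fn p b d s l) t) \<longlongrightarrow> L) at_top)"
    and C1': "\<exists>l. l \<notin> closure (Delta p b d ` {0..}) \<and> ereal l \<noteq> dinf \<and>
               (\<exists>L. ((\<lambda>t. pi_fn p b d t l) \<longlongrightarrow> L) at_top \<and> L \<noteq> 0)"
    and C2: "\<forall>l. ereal l \<noteq> dinf \<longrightarrow>
               (\<exists>L. ((\<lambda>t. cnj (b t) * c t / complex_of_real (d t - l)) \<longlongrightarrow> L) at_top) \<and>
               (\<exists>L. ((\<lambda>t. vector_derivative (\<lambda>s. cnj (b s) * c s / complex_of_real (d s - l)) (at t))
                        \<longlongrightarrow> L) at_top)"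
    and C3: "\<forall>l. ereal l \<noteq> dinf \<longrightarrow>
               (\<exists>L. ((\<lambda>t. q t - l - (cmod (c t))\<^sup>2 / (d t - l)) \<longlongrightarrow> L) at_top)"
begin

abbreviation "Dc \<equiv> closure (Delta p b d ` {0..})"
abbreviation "\<sigma> \<equiv> sigma_s p q b c d dinf"

abbreviation "bc l t \<equiv> cnj (b t) * c t / complex_of_real (d t - l)"
abbreviation "qc l t \<equiv> q t - l - (cmod (c t))\<^sup>2 / (d t - l)"

lemma eventually_d_neq:
  assumes "ereal l \<noteq> dinf"
  shows "\<forall>\<^sub>F t in at_top. d t \<noteq> l"
  using tendsto_imp_eventually_ne[OF B1 assms[symmetric]] by eventually_elim simp

lemma pi_fn_differentiable:
  assumes "0 < t" and "d t \<noteq> l"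
  shows "(\<lambda>s. pi_fn p b d s l) differentiable at t"
proof -
  have "(\<lambda>s. (norm (b s))\<^sup>2) differentiable at t"
    by (rule differentiable_compose[OF differentiable_sqnorm_at b_differentiable[OF assms(1)]])
  then show ?thesis
    unfolding pi_fn_def using assms(2)
    by (intro differentiable_diff differentiable_divide differentiable_const
        p_differentiable[OF assms(1)] d_differentiable[OF assms(1)]) simp_all
qed

lemma bc_differentiable:
  assumes "0 < t" and "d t \<noteq> l"
  shows "bc l differentiable at t"
proof -
  have "(\<lambda>s. cnj (b s)) differentiable at t"
    by (rule differentiable_compose[OF bounded_linear_imp_differentiable[OF bounded_linear_cnj]
          b_differentiable[OF assms(1)]])
  moreover have "(\<lambda>s. complex_of_real (d s - l)) differentiable at t"
    using d_differentiable[OF assms(1)]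
    by (intro differentiable_compose[OF bounded_linear_imp_differentiable[OF bounded_linear_of_real]]) simp
  ultimately show ?thesis
    using assms(2) by (intro differentiable_divide differentiable_mult c_differentiable[OF assms(1)]) simp_all
qed

lemma tendsto_rho_fn_div_pi_fn:
  assumes l: "l \<notin> Dc" "ereal l \<noteq> dinf"
    and P: "((\<lambda>t. pi_fn p b d t l) \<longlongrightarrow> P) at_top" "P \<noteq> 0"
    and A: "((\<lambda>t. - 2 * Im (b t * cnj (c t)) / (d t - l)) \<longlongrightarrow> A) at_top"
  shows "((\<lambda>t. rho_fn p b c d t l / complex_of_real (pi_fn p b d t l)) \<longlongrightarrow> of_real (A / P)) at_top"
proof -
  obtain P' where P': "((\<lambda>t. deriv (\<lambda>s. pi_fn p b d s l) t) \<longlongrightarrow> P') at_top"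
    using C1 l by blast
  have "\<forall>\<^sub>F t in at_top. 0 < t \<and> d t \<noteq> l"
    using eventually_gt_at_top eventually_d_neq[OF l(2)] by (rule eventually_conj)
  then have "\<forall>\<^sub>F t in at_top.
      ((\<lambda>s. pi_fn p b d s l) has_vector_derivative deriv (\<lambda>s. pi_fn p b d s l) t) (at t)"
    by eventually_elim
      (simp add: DERIV_deriv_iff_real_differentiable pi_fn_differentiable
        flip: has_real_derivative_iff_has_vector_derivative)
  then have "P' = 0"
    by (rule tendsto_vector_derivative_at_top_eq_0[OF P(1) P'])
  then show ?thesis
    using tendsto_divide[OF tendsto_add[OF tendsto_of_real[OF A] tendsto_mult[OF tendsto_const
          tendsto_of_real[OF P']]] tendsto_of_real[OF P(1)]] P(2)
    by (simp add: rho_fn_def)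
qed

lemma tendsto_kappa_fn_div_pi_fn:
  assumes l: "ereal l \<noteq> dinf"
    and P: "((\<lambda>t. pi_fn p b d t l) \<longlongrightarrow> P) at_top" "P \<noteq> 0"
    and Q: "(qc l \<longlongrightarrow> Q) at_top"
  shows "((\<lambda>t. kappa_fn q b c d t l / complex_of_real (pi_fn p b d t l)) \<longlongrightarrow> of_real (Q / P)) at_top"
proof -
  obtain K K' where K: "(bc l \<longlongrightarrow> K) at_top"
    and K': "((\<lambda>t. vector_derivative (bc l) (at t)) \<longlongrightarrow> K') at_top"
    using C2 l by blast
  have "\<forall>\<^sub>F t in at_top. 0 < t \<and> d t \<noteq> l"
    using eventually_gt_at_top eventually_d_neq[OF l] by (rule eventually_conj)
  then have "\<forall>\<^sub>F t in at_top. (bc l has_vector_derivative vector_derivative (bc l) (at t)) (at t)"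
    by eventually_elim (intro vector_derivative_works[THEN iffD1] bc_differentiable; simp)
  then have "K' = 0"
    by (rule tendsto_vector_derivative_at_top_eq_0[OF K K'])
  then show ?thesis
    using tendsto_divide[OF tendsto_add[OF tendsto_of_real[OF Q] K'] tendsto_of_real[OF P(1)]] P(2)
    by (simp add: kappa_fn_def)
qed

lemma sigma_s_iff_discriminant:
  assumes l: "l \<notin> Dc" "ereal l \<noteq> dinf"
    and P: "((\<lambda>t. pi_fn p b d t l) \<longlongrightarrow> P) at_top" "P \<noteq> 0"
    and A: "((\<lambda>t. - 2 * Im (b t * cnj (c t)) / (d t - l)) \<longlongrightarrow> A) at_top"
    and Q: "(qc l \<longlongrightarrow> Q) at_top"
  shows "l \<in> \<sigma> \<longleftrightarrow> 0 \<le> A\<^sup>2 - 4 * Q * P"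
proof -
  note rho = tendsto_rho_fn_div_pi_fn[OF l P A]
  note kappa = tendsto_kappa_fn_div_pi_fn[OF l(2) P Q]
  define D where "D = (complex_of_real (A / P))\<^sup>2 - 4 * complex_of_real (Q / P)"
  have "l \<in> \<sigma> \<longleftrightarrow> Im D = 0 \<and> 0 \<le> Re D"
  proof
    assume "l \<in> \<sigma>"
    then obtain L1 L2 where L1: "((\<lambda>t. rho_fn p b c d t l / complex_of_real (pi_fn p b d t l)) \<longlongrightarrow> L1) at_top"
      and L2: "((\<lambda>t. kappa_fn q b c d t l / complex_of_real (pi_fn p b d t l)) \<longlongrightarrow> L2) at_top"
      and "Im (L1\<^sup>2 - 4 * L2) = 0 \<and> 0 \<le> Re (L1\<^sup>2 - 4 * L2)"
      unfolding sigma_s_def by blast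
    moreover have "L1 = complex_of_real (A / P)" and "L2 = complex_of_real (Q / P)"
      using tendsto_unique[OF trivial_limit_at_top_linorder L1 rho]
        tendsto_unique[OF trivial_limit_at_top_linorder L2 kappa] by simp_all
    ultimately show "Im D = 0 \<and> 0 \<le> Re D"
      unfolding D_def by simp
  next
    assume "Im D = 0 \<and> 0 \<le> Re D"
    then show "l \<in> \<sigma>"
      unfolding sigma_s_def D_def using l rho kappa by blast
  qed
  also have "D = complex_of_real ((A / P)\<^sup>2 - 4 * (Q / P))"
    by (simp add: D_def)
  also have "(A / P)\<^sup>2 - 4 * (Q / P) = (A\<^sup>2 - 4 * Q * P) / P\<^sup>2"
    using P(2) by (simp add: field_simps power2_eq_square)
  finally show ?thesis
    using P(2) by (simp add: zero_le_divide_iff)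
qed

lemma closure_Delta_if_tendsto_pi_fn_0:
  assumes "((\<lambda>t. pi_fn p b d t l) \<longlongrightarrow> 0) at_top" and "((\<lambda>t. (d t - l) / p t) \<longlongrightarrow> R) at_top"
    and "\<forall>\<^sub>F t in at_top. d t \<noteq> l"
  shows "l \<in> Dc"
proof (rule Lim_in_closed_set[OF closed_closure])
  show "\<forall>\<^sub>F t in at_top. Delta p b d t \<in> Dc"
    using eventually_ge_at_top[of 0] by eventually_elim (simp add: closure_subset[THEN subsetD])
  have "\<forall>\<^sub>F t in at_top. l + pi_fn p b d t l * ((d t - l) / p t) = Delta p b d t"
    using assms(3) eventually_ge_at_top[of 0]
  proof eventually_elim
    case (elim t)
    then have "p t \<noteq> 0"
      using p_pos by (metis less_irrefl)
    with elim show ?case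
      by (simp add: pi_fn_def Delta_def field_simps)
  qed
  moreover have "((\<lambda>t. l + pi_fn p b d t l * ((d t - l) / p t)) \<longlongrightarrow> l + 0 * R) at_top"
    by (intro tendsto_intros assms(1,2))
  ultimately show "(Delta p b d \<longlongrightarrow> l) at_top"
    by (simp add: tendsto_cong)
qed simp

lemma sigma_s_eq_nonneg_set:
  assumes "\<And>l. l \<notin> Dc \<Longrightarrow> ereal l \<noteq> dinf \<Longrightarrow> l \<in> \<sigma> \<longleftrightarrow> 0 \<le> H l"
  shows "\<sigma> = {l. 0 \<le> H l} - (Dc \<union> {l. ereal l = dinf})"
  using assms unfolding sigma_s_def by auto

lemma tendsto_cmod_b_sq_finite_dinf:
  assumes dinf: "dinf = ereal D" and pL: "(p \<longlongrightarrow> L) at_top"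
  obtains B where "((\<lambda>t. (cmod (b t))\<^sup>2) \<longlongrightarrow> B) at_top" and "0 < B \<or> 0 < L"
proof -
  have dD: "(d \<longlongrightarrow> D) at_top"
    using B1 dinf by simp
  obtain l0 P0 where l0: "ereal l0 \<noteq> dinf" and P0: "((\<lambda>t. pi_fn p b d t l0) \<longlongrightarrow> P0) at_top" "P0 \<noteq> 0"
    using C1' by blast
  define B where "B = (L - P0) * (D - l0)"
  have "((\<lambda>t. (p t - pi_fn p b d t l0) * (d t - l0)) \<longlongrightarrow> B) at_top"
    unfolding B_def by (intro tendsto_intros pL P0 dD)
  moreover have "\<forall>\<^sub>F t in at_top. (p t - pi_fn p b d t l0) * (d t - l0) = (cmod (b t))\<^sup>2"
    using eventually_d_neq[OF l0] by eventually_elim (simp add: pi_fn_def)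
  ultimately have B: "((\<lambda>t. (cmod (b t))\<^sup>2) \<longlongrightarrow> B) at_top"
    by (rule Lim_transform_eventually)
  have "0 \<le> B"
    using B by (rule tendsto_lowerbound) simp_all
  have "0 \<le> L"
    using pL by (rule tendsto_lowerbound) (auto intro: less_imp_le p_pos eventually_at_top_linorderI)
  have "B \<noteq> 0" if "L = 0"
    using P0(2) l0 dinf that by (simp add: B_def)
  with \<open>0 \<le> B\<close> \<open>0 \<le> L\<close> have "0 < B \<or> 0 < L"
    by fastforce
  with B that show ?thesis
    by blast
qed

lemma tendsto_cnj_b_mult_c_finite_dinf:
  assumes dinf: "dinf = ereal D"
  shows "\<exists>K. ((\<lambda>t. cnj (b t) * c t) \<longlongrightarrow> K) at_top"
proof -
  have dD: "(d \<longlongrightarrow> D) at_top"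
    using B1 dinf by simp
  define l1 where "l1 = D + 1"
  have "ereal l1 \<noteq> dinf"
    using dinf by (simp add: l1_def)
  then obtain K where "(bc l1 \<longlongrightarrow> K) at_top"
    using C2 by blast
  then have "((\<lambda>t. bc l1 t * complex_of_real (d t - l1)) \<longlongrightarrow> K * complex_of_real (D - l1)) at_top"
    by (intro tendsto_intros dD)
  moreover have "\<forall>\<^sub>F t in at_top. bc l1 t * complex_of_real (d t - l1) = cnj (b t) * c t"
    using eventually_d_neq[OF \<open>ereal l1 \<noteq> dinf\<close>] by eventually_elim simp
  ultimately have "((\<lambda>t. cnj (b t) * c t) \<longlongrightarrow> K * complex_of_real (D - l1)) at_top"
    by (rule Lim_transform_eventually)
  then show ?thesis ..
qed

text \<open>Since l2 = l1 + 1, the difference of the (C3)-functions at l1 and l2 is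
  the square of the modulus of c divided by (d - l1) (d - l2).\<close>
lemma tendsto_cmod_c_sq_finite_dinf:
  assumes dinf: "dinf = ereal D"
  obtains C q0 where "((\<lambda>t. (cmod (c t))\<^sup>2) \<longlongrightarrow> C) at_top" and "(q \<longlongrightarrow> q0) at_top"
proof -
  have dD: "(d \<longlongrightarrow> D) at_top"
    using B1 dinf by simp
  define l1 l2 where "l1 = D + 1" and "l2 = D + 2"
  have l12: "ereal l1 \<noteq> dinf" "l1 \<noteq> D" "ereal l2 \<noteq> dinf"
    by (simp_all add: dinf l1_def l2_def)
  obtain Q1 Q2 where Q1: "(qc l1 \<longlongrightarrow> Q1) at_top" and Q2: "(qc l2 \<longlongrightarrow> Q2) at_top"
    using C3 l12 by blast
  define C where "C = (Q1 - Q2 - 1) * (D - l1) * (D - l2)"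
  have "((\<lambda>t. (qc l1 t - qc l2 t - 1) * (d t - l1) * (d t - l2)) \<longlongrightarrow> C) at_top"
    unfolding C_def by (intro tendsto_intros Q1 Q2 dD)
  moreover have "\<forall>\<^sub>F t in at_top. (qc l1 t - qc l2 t - 1) * (d t - l1) * (d t - l2) = (cmod (c t))\<^sup>2"
    using eventually_d_neq[OF l12(1)] eventually_d_neq[OF l12(3)]
  proof eventually_elim
    case (elim t)
    define y where "y = d t - l2"
    have x: "d t - l1 = y + 1"
      by (simp add: y_def l1_def l2_def)
    have "y \<noteq> 0" "y + 1 \<noteq> 0"
      using elim x by (simp_all add: y_def)
    have "qc l1 t - qc l2 t - 1 = (cmod (c t))\<^sup>2 / y - (cmod (c t))\<^sup>2 / (y + 1)"
      using x by (simp add: y_def l1_def l2_def)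
    also have "\<dots> = (cmod (c t))\<^sup>2 / ((y + 1) * y)"
      using \<open>y \<noteq> 0\<close> \<open>y + 1 \<noteq> 0\<close> by (simp add: field_simps)
    finally show ?case
      unfolding x y_def[symmetric] using \<open>y \<noteq> 0\<close> \<open>y + 1 \<noteq> 0\<close> by simp
  qed
  ultimately have C: "((\<lambda>t. (cmod (c t))\<^sup>2) \<longlongrightarrow> C) at_top"
    by (rule Lim_transform_eventually)
  have "((\<lambda>t. qc l1 t + l1 + (cmod (c t))\<^sup>2 / (d t - l1)) \<longlongrightarrow> Q1 + l1 + C / (D - l1)) at_top"
    using l12(2) by (intro tendsto_intros Q1 C dD) simp
  then have "(q \<longlongrightarrow> Q1 + l1 + C / (D - l1)) at_top"
    by simp
  with C that show ?thesis
    by blast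
qed

lemma tendsto_pi_fn_ne_0_finite_dinf:
  assumes dinf: "dinf = ereal D" and pL: "(p \<longlongrightarrow> L) at_top"
    and B: "((\<lambda>t. (cmod (b t))\<^sup>2) \<longlongrightarrow> B) at_top" and "0 < B \<or> 0 < L"
    and l: "l \<notin> Dc" "l \<noteq> D"
  shows "((\<lambda>t. pi_fn p b d t l) \<longlongrightarrow> L - B / (D - l)) at_top" and "L - B / (D - l) \<noteq> 0"
proof -
  have dD: "(d \<longlongrightarrow> D) at_top"
    using B1 dinf by simp
  show P: "((\<lambda>t. pi_fn p b d t l) \<longlongrightarrow> L - B / (D - l)) at_top"
    unfolding pi_fn_def using l(2) by (intro tendsto_intros pL B dD) simp
  show "L - B / (D - l) \<noteq> 0"
  proof
    assume P0: "L - B / (D - l) = 0"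
    show False
    proof (cases "L = 0")
      case True
      then show False
        using P0 \<open>0 < B \<or> 0 < L\<close> l(2) by simp
    next
      case False
      then have "((\<lambda>t. (d t - l) / p t) \<longlongrightarrow> (D - l) / L) at_top"
        by (intro tendsto_intros dD pL)
      then have "l \<in> Dc"
        using P P0 eventually_d_neq[of l] l dinf by (intro closure_Delta_if_tendsto_pi_fn_0) simp_all
      with l(1) show False
        by simp
    qed
  qed
qed

lemma sigma_s_iff_finite_dinf:
  assumes dinf: "dinf = ereal D" and pL: "(p \<longlongrightarrow> L) at_top"
  obtains B Kr q0 C where "0 < B \<or> 0 < L"
    and "\<And>l. l \<notin> Dc \<Longrightarrow> l \<noteq> D \<Longrightarrow>
      l \<in> \<sigma> \<longleftrightarrow> 0 \<le> Kr\<^sup>2 - ((q0 - l) * (D - l) - C) * (L * (D - l) - B)"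
proof -
  have dD: "(d \<longlongrightarrow> D) at_top"
    using B1 dinf by simp
  obtain B where B: "((\<lambda>t. (cmod (b t))\<^sup>2) \<longlongrightarrow> B) at_top" and "0 < B \<or> 0 < L"
    using tendsto_cmod_b_sq_finite_dinf[OF dinf pL] by blast
  obtain K where K: "((\<lambda>t. cnj (b t) * c t) \<longlongrightarrow> K) at_top"
    using tendsto_cnj_b_mult_c_finite_dinf[OF dinf] by blast
  obtain C q0 where C: "((\<lambda>t. (cmod (c t))\<^sup>2) \<longlongrightarrow> C) at_top" and q0: "(q \<longlongrightarrow> q0) at_top"
    using tendsto_cmod_c_sq_finite_dinf[OF dinf] by blast
  have "l \<in> \<sigma> \<longleftrightarrow> 0 \<le> (Im K)\<^sup>2 - ((q0 - l) * (D - l) - C) * (L * (D - l) - B)"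
    if l: "l \<notin> Dc" "l \<noteq> D" for l
  proof -
    have "D - l \<noteq> 0" and "ereal l \<noteq> dinf"
      using l dinf by simp_all
    have "((\<lambda>t. 2 * Im (cnj (b t) * c t) / (d t - l)) \<longlongrightarrow> 2 * Im K / (D - l)) at_top"
      using \<open>D - l \<noteq> 0\<close> by (intro tendsto_intros K dD) simp
    then have A: "((\<lambda>t. - 2 * Im (b t * cnj (c t)) / (d t - l)) \<longlongrightarrow> 2 * Im K / (D - l)) at_top"
      by simp
    have Q: "(qc l \<longlongrightarrow> q0 - l - C / (D - l)) at_top"
      using \<open>D - l \<noteq> 0\<close> by (intro tendsto_intros q0 C dD) simp
    have "l \<in> \<sigma> \<longleftrightarrow>
        0 \<le> (2 * Im K / (D - l))\<^sup>2 - 4 * (q0 - l - C / (D - l)) * (L - B / (D - l))"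
      using tendsto_pi_fn_ne_0_finite_dinf[OF dinf pL B \<open>0 < B \<or> 0 < L\<close> l]
      by (intro sigma_s_iff_discriminant[OF l(1) \<open>ereal l \<noteq> dinf\<close> _ _ A Q])
    also have "(2 * Im K / (D - l))\<^sup>2 - 4 * (q0 - l - C / (D - l)) * (L - B / (D - l)) =
        4 * ((Im K)\<^sup>2 - ((q0 - l) * (D - l) - C) * (L * (D - l) - B)) / (D - l)\<^sup>2"
    proof -
      have "(2 * x / u)\<^sup>2 - 4 * (y - C / u) * (L - B / u) = 4 * (x\<^sup>2 - (y * u - C) * (L * u - B)) / u\<^sup>2"
        if "u \<noteq> 0" for x y u :: real
        using that by (simp add: field_simps power2_eq_square)
      from this[OF \<open>D - l \<noteq> 0\<close>] show ?thesis .
    qed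
    finally show ?thesis
      using \<open>D - l \<noteq> 0\<close> by (simp add: zero_le_divide_iff)
  qed
  with that \<open>0 < B \<or> 0 < L\<close> show ?thesis
    by blast
qed

lemma sigma_s_finite_dinf_pos:
  assumes dinf: "dinf = ereal D" and pL: "(p \<longlongrightarrow> L) at_top" and "0 < L"
  shows "\<exists>sm sp s. sm \<le> sp \<and> sp \<le> s \<and>
    (\<sigma> = ({sm..sp} \<union> {s..}) - (Dc \<union> {l. ereal l = dinf}) \<or> \<sigma> = {s..} - (Dc \<union> {l. ereal l = dinf}))"
proof -
  obtain B Kr q0 C where "0 < B \<or> 0 < L" and \<sigma>_iff: "\<And>l. l \<notin> Dc \<Longrightarrow> l \<noteq> D \<Longrightarrow>
      l \<in> \<sigma> \<longleftrightarrow> 0 \<le> Kr\<^sup>2 - ((q0 - l) * (D - l) - C) * (L * (D - l) - B)"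
    by (rule sigma_s_iff_finite_dinf[OF dinf pL]) (rule that)
  define b3 c3 e3 where "b3 = - ((L * D - B) + L * (q0 + D))"
    and "c3 = (q0 + D) * (L * D - B) + L * (q0 * D - C)"
    and "e3 = Kr\<^sup>2 - (q0 * D - C) * (L * D - B)"
  have "Kr\<^sup>2 - ((q0 - l) * (D - l) - C) * (L * (D - l) - B) = L * l ^ 3 + b3 * l\<^sup>2 + c3 * l + e3" for l
    unfolding b3_def c3_def e3_def by (simp add: algebra_simps power2_eq_square power3_eq_cube)
  then have \<sigma>_eq: "\<sigma> = {l. 0 \<le> L * l ^ 3 + b3 * l\<^sup>2 + c3 * l + e3} - (Dc \<union> {l. ereal l = dinf})"
    using \<sigma>_iff dinf by (intro sigma_s_eq_nonneg_set) simp
  obtain sm sp s where "sm \<le> sp" "sp \<le> s"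
    and "{l. 0 \<le> L * l ^ 3 + b3 * l\<^sup>2 + c3 * l + e3} = {sm..sp} \<union> {s..} \<or>
      {l. 0 \<le> L * l ^ 3 + b3 * l\<^sup>2 + c3 * l + e3} = {s..}"
    using nonneg_set_cubic[OF \<open>0 < L\<close>, of b3 c3 e3] by iprover
  then show ?thesis
    unfolding \<sigma>_eq by blast
qed

lemma sigma_s_finite_dinf_zero:
  assumes dinf: "dinf = ereal D" and p0: "(p \<longlongrightarrow> 0) at_top"
  shows "\<exists>sm sp. sm \<le> sp \<and> \<sigma> = ({..sm} \<union> {sp..}) - (Dc \<union> {l. ereal l = dinf})"
proof -
  obtain B Kr q0 C where "0 < B \<or> 0 < (0::real)" and \<sigma>_iff: "\<And>l. l \<notin> Dc \<Longrightarrow> l \<noteq> D \<Longrightarrow>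
      l \<in> \<sigma> \<longleftrightarrow> 0 \<le> Kr\<^sup>2 - ((q0 - l) * (D - l) - C) * (0 * (D - l) - B)"
    by (rule sigma_s_iff_finite_dinf[OF dinf p0]) (rule that)
  then have "0 < B"
    by simp
  have "Kr\<^sup>2 - ((q0 - l) * (D - l) - C) * (0 * (D - l) - B) =
      B * l\<^sup>2 + (- B * (q0 + D)) * l + (Kr\<^sup>2 + B * (q0 * D - C))" for l
    by (simp add: algebra_simps power2_eq_square)
  then have \<sigma>_eq: "\<sigma> = {l. 0 \<le> B * l\<^sup>2 + (- B * (q0 + D)) * l + (Kr\<^sup>2 + B * (q0 * D - C))}
      - (Dc \<union> {l. ereal l = dinf})"
    using \<sigma>_iff dinf by (intro sigma_s_eq_nonneg_set) (simp, linarith)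
  show ?thesis
    unfolding \<sigma>_eq using nonneg_set_quadratic_pos[OF \<open>0 < B\<close>] by metis
qed

lemma tendsto_pi_fn_infinite_dinf:
  assumes inf: "dinf = \<infinity> \<or> dinf = - \<infinity>"
    and bd: "((\<lambda>t. (cmod (b t))\<^sup>2 / (d t)\<^sup>2) \<longlongrightarrow> L) at_top"
    and P0: "((\<lambda>t. pi_fn p b d t l0) \<longlongrightarrow> P0) at_top"
  shows "((\<lambda>t. pi_fn p b d t l) \<longlongrightarrow> P0 + L * (l0 - l)) at_top"
proof -
  have d_inf: "filterlim d at_infinity at_top"
    using filterlim_at_infinity_if_ereal_tendsto_infinity[OF B1 inf] .
  have "((\<lambda>t. pi_fn p b d t l0 + (cmod (b t))\<^sup>2 / (d t)\<^sup>2 * (d t / (d t - l0)) * (d t / (d t - l)) * (l0 - l))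
      \<longlongrightarrow> P0 + L * 1 * 1 * (l0 - l)) at_top"
    using tendsto_shifted_quotient_at_infinity[OF d_inf, of 0]
    by (intro tendsto_intros P0 bd) simp_all
  moreover have "\<forall>\<^sub>F t in at_top.
      pi_fn p b d t l0 + (cmod (b t))\<^sup>2 / (d t)\<^sup>2 * (d t / (d t - l0)) * (d t / (d t - l)) * (l0 - l) =
      pi_fn p b d t l"
    using filterlim_at_infinity_imp_eventually_ne[OF d_inf, of 0]
      filterlim_at_infinity_imp_eventually_ne[OF d_inf, of l0]
      filterlim_at_infinity_imp_eventually_ne[OF d_inf, of l]
  proof eventually_elim
    case (elim t)
    define u v where "u = d t - l0" and "v = d t - l"
    have "u \<noteq> 0" "v \<noteq> 0" and shift: "l0 - l = v - u"
      using elim by (simp_all add: u_def v_def)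
    show ?case
      unfolding pi_fn_def shift u_def[symmetric] v_def[symmetric]
      using elim(1) \<open>u \<noteq> 0\<close> \<open>v \<noteq> 0\<close> by (simp add: field_simps power2_eq_square)
  qed
  ultimately show ?thesis
    by (simp add: tendsto_cong)
qed

lemma tendsto_Im_term_infinite_dinf:
  assumes inf: "dinf = \<infinity> \<or> dinf = - \<infinity>"
  obtains K where "\<And>l. ((\<lambda>t. - 2 * Im (b t * cnj (c t)) / (d t - l)) \<longlongrightarrow> 2 * Im K) at_top"
proof -
  have d_inf: "filterlim d at_infinity at_top"
    using filterlim_at_infinity_if_ereal_tendsto_infinity[OF B1 inf] .
  have "ereal 0 \<noteq> dinf"
    using inf by auto
  then obtain K where K: "(bc 0 \<longlongrightarrow> K) at_top"
    using C2 by blast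
  have "((\<lambda>t. - 2 * Im (b t * cnj (c t)) / (d t - l)) \<longlongrightarrow> 2 * Im K) at_top" for l
  proof -
    have "((\<lambda>t. 2 * Im (bc 0 t) * (d t / (d t - l))) \<longlongrightarrow> 2 * Im K * 1) at_top"
      using tendsto_shifted_quotient_at_infinity[OF d_inf, of 0 l]
      by (intro tendsto_intros K) simp_all
    moreover have "\<forall>\<^sub>F t in at_top. 2 * Im (bc 0 t) * (d t / (d t - l)) = - 2 * Im (b t * cnj (c t)) / (d t - l)"
      using filterlim_at_infinity_imp_eventually_ne[OF d_inf, of 0] by eventually_elim simp
    ultimately have "((\<lambda>t. - 2 * Im (b t * cnj (c t)) / (d t - l)) \<longlongrightarrow> 2 * Im K * 1) at_top"
      by (rule Lim_transform_eventually)
    then show ?thesis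
      by simp
  qed
  with that show ?thesis
    by blast
qed

lemma tendsto_cmod_c_sq_div_infinite_dinf:
  assumes inf: "dinf = \<infinity> \<or> dinf = - \<infinity>"
  obtains Q0 Cc where "(qc 0 \<longlongrightarrow> Q0) at_top"
    and "((\<lambda>t. (cmod (c t))\<^sup>2 / (d t * (d t - 1))) \<longlongrightarrow> Cc) at_top" and "0 \<le> Cc"
proof -
  have d_inf: "filterlim d at_infinity at_top"
    using filterlim_at_infinity_if_ereal_tendsto_infinity[OF B1 inf] .
  have "ereal 0 \<noteq> dinf" "ereal 1 \<noteq> dinf"
    using inf by auto
  then obtain Q0 Q1 where Q0: "(qc 0 \<longlongrightarrow> Q0) at_top" and Q1: "(qc 1 \<longlongrightarrow> Q1) at_top"
    using C3 by blast
  have "((\<lambda>t. qc 0 t - qc 1 t - 1) \<longlongrightarrow> Q0 - Q1 - 1) at_top"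
    by (intro tendsto_intros Q0 Q1)
  moreover have "\<forall>\<^sub>F t in at_top. qc 0 t - qc 1 t - 1 = (cmod (c t))\<^sup>2 / (d t * (d t - 1))"
    using filterlim_at_infinity_imp_eventually_ne[OF d_inf, of 0]
      filterlim_at_infinity_imp_eventually_ne[OF d_inf, of 1]
  proof eventually_elim
    case (elim t)
    then have "d t - 1 \<noteq> 0"
      by simp
    have "qc 0 t - qc 1 t - 1 = (cmod (c t))\<^sup>2 / (d t - 1) - (cmod (c t))\<^sup>2 / d t"
      by simp
    also have "\<dots> = (cmod (c t))\<^sup>2 / (d t * (d t - 1))"
      using elim(1) \<open>d t - 1 \<noteq> 0\<close> by (simp add: field_simps)
    finally show ?case .
  qed
  ultimately have Cc: "((\<lambda>t. (cmod (c t))\<^sup>2 / (d t * (d t - 1))) \<longlongrightarrow> Q0 - Q1 - 1) at_top"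
    by (rule Lim_transform_eventually)
  have "\<forall>\<^sub>F t in at_top. 2 \<le> \<bar>d t\<bar>"
    using d_inf by (simp add: filterlim_at_infinity[OF order_refl])
  then have "\<forall>\<^sub>F t in at_top. 0 \<le> (cmod (c t))\<^sup>2 / (d t * (d t - 1))"
  proof eventually_elim
    case (elim t)
    then have "0 < d t * (d t - 1)"
      by (cases "0 \<le> d t") (auto intro: mult_pos_pos mult_neg_neg)
    then show ?case
      by simp
  qed
  then have "0 \<le> Q0 - Q1 - 1"
    by (rule tendsto_lowerbound[OF Cc _ trivial_limit_at_top_linorder])
  with that Q0 Cc show ?thesis
    by blast
qed

lemma tendsto_qc_infinite_dinf:
  assumes inf: "dinf = \<infinity> \<or> dinf = - \<infinity>"
  obtains Cc Q0 where "0 \<le> Cc" and "\<And>l. (qc l \<longlongrightarrow> Q0 - l * (1 + Cc)) at_top"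
proof -
  have d_inf: "filterlim d at_infinity at_top"
    using filterlim_at_infinity_if_ereal_tendsto_infinity[OF B1 inf] .
  note d_neq = filterlim_at_infinity_imp_eventually_ne[OF d_inf]
  obtain Q0 Cc where Q0: "(qc 0 \<longlongrightarrow> Q0) at_top"
    and Cc: "((\<lambda>t. (cmod (c t))\<^sup>2 / (d t * (d t - 1))) \<longlongrightarrow> Cc) at_top" and "0 \<le> Cc"
    using tendsto_cmod_c_sq_div_infinite_dinf[OF inf] by blast
  have "(qc l \<longlongrightarrow> Q0 - l * (1 + Cc)) at_top" for l
  proof -
    have "((\<lambda>t. qc 0 t - l - (cmod (c t))\<^sup>2 / (d t * (d t - 1)) * ((d t - 1) / (d t - l)) * l)
        \<longlongrightarrow> Q0 - l - Cc * 1 * l) at_top"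
      using tendsto_shifted_quotient_at_infinity[OF d_inf, of 1 l]
      by (intro tendsto_intros Q0 Cc)
    moreover have "\<forall>\<^sub>F t in at_top.
        qc 0 t - l - (cmod (c t))\<^sup>2 / (d t * (d t - 1)) * ((d t - 1) / (d t - l)) * l = qc l t"
      using d_neq[of 0] d_neq[of 1] d_neq[of l]
    proof eventually_elim
      case (elim t)
      then have "d t - 1 \<noteq> 0" "d t - l \<noteq> 0"
        by simp_all
      have "(cmod (c t))\<^sup>2 / (d t * (d t - 1)) * ((d t - 1) / (d t - l)) * l =
          (cmod (c t))\<^sup>2 * l / (d t * (d t - l))"
        using \<open>d t - 1 \<noteq> 0\<close> by simp
      also have "\<dots> = (cmod (c t))\<^sup>2 / (d t - l) - (cmod (c t))\<^sup>2 / d t"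
        using elim(1) \<open>d t - l \<noteq> 0\<close> by (simp add: field_simps)
      finally show ?case
        by simp
    qed
    ultimately have "(qc l \<longlongrightarrow> Q0 - l - Cc * 1 * l) at_top"
      by (rule Lim_transform_eventually)
    then show ?thesis
      by (simp add: algebra_simps)
  qed
  with that \<open>0 \<le> Cc\<close> show ?thesis
    by blast
qed

lemma sigma_s_iff_infinite_dinf:
  assumes inf: "dinf = \<infinity> \<or> dinf = - \<infinity>"
    and bd: "((\<lambda>t. (cmod (b t))\<^sup>2 / (d t)\<^sup>2) \<longlongrightarrow> L) at_top"
    and P0: "((\<lambda>t. pi_fn p b d t l0) \<longlongrightarrow> P0) at_top"
  obtains Cc Kr Q0 where "0 \<le> Cc"
    and "\<And>l. l \<notin> Dc \<Longrightarrow> P0 + L * (l0 - l) \<noteq> 0 \<Longrightarrow>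
      l \<in> \<sigma> \<longleftrightarrow> 0 \<le> Kr\<^sup>2 - (Q0 - l * (1 + Cc)) * (P0 + L * (l0 - l))"
proof -
  obtain K where A: "\<And>l. ((\<lambda>t. - 2 * Im (b t * cnj (c t)) / (d t - l)) \<longlongrightarrow> 2 * Im K) at_top"
    using tendsto_Im_term_infinite_dinf[OF inf] by blast
  obtain Cc Q0 where "0 \<le> Cc" and Q: "\<And>l. (qc l \<longlongrightarrow> Q0 - l * (1 + Cc)) at_top"
    using tendsto_qc_infinite_dinf[OF inf] by blast
  have "l \<in> \<sigma> \<longleftrightarrow> 0 \<le> (Im K)\<^sup>2 - (Q0 - l * (1 + Cc)) * (P0 + L * (l0 - l))"
    if "l \<notin> Dc" and "P0 + L * (l0 - l) \<noteq> 0" for l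
  proof -
    have "ereal l \<noteq> dinf"
      using inf by auto
    then have "l \<in> \<sigma> \<longleftrightarrow> 0 \<le> (2 * Im K)\<^sup>2 - 4 * (Q0 - l * (1 + Cc)) * (P0 + L * (l0 - l))"
      using sigma_s_iff_discriminant[OF that(1) _ tendsto_pi_fn_infinite_dinf[OF inf bd P0] that(2) A Q]
      by blast
    also have "(2 * Im K)\<^sup>2 - 4 * (Q0 - l * (1 + Cc)) * (P0 + L * (l0 - l)) =
        4 * ((Im K)\<^sup>2 - (Q0 - l * (1 + Cc)) * (P0 + L * (l0 - l)))"
      by (simp add: power2_eq_square algebra_simps)
    finally show ?thesis
      by simp
  qed
  with that \<open>0 \<le> Cc\<close> show ?thesis
    by blast
qed

lemma tendsto_p_div_infinite_dinf:
  assumes inf: "dinf = \<infinity> \<or> dinf = - \<infinity>"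
    and bd: "((\<lambda>t. (cmod (b t))\<^sup>2 / (d t)\<^sup>2) \<longlongrightarrow> L) at_top"
    and P: "((\<lambda>t. pi_fn p b d t l) \<longlongrightarrow> P) at_top"
  shows "((\<lambda>t. p t / (d t - l)) \<longlongrightarrow> L) at_top"
proof -
  have d_inf: "filterlim d at_infinity at_top"
    using filterlim_at_infinity_if_ereal_tendsto_infinity[OF B1 inf] .
  have "((\<lambda>t. pi_fn p b d t l * inverse (d t) * (d t / (d t - l)) + (cmod (b t))\<^sup>2 / (d t)\<^sup>2 * (d t / (d t - l))\<^sup>2)
      \<longlongrightarrow> P * 0 * 1 + L * 1\<^sup>2) at_top"
    using tendsto_shifted_quotient_at_infinity[OF d_inf, of 0 l] filterlim_compose[OF tendsto_inverse_0 d_inf]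
    by (intro tendsto_intros P bd) simp_all
  moreover have "\<forall>\<^sub>F t in at_top.
      pi_fn p b d t l * inverse (d t) * (d t / (d t - l)) + (cmod (b t))\<^sup>2 / (d t)\<^sup>2 * (d t / (d t - l))\<^sup>2 =
      p t / (d t - l)"
    using filterlim_at_infinity_imp_eventually_ne[OF d_inf, of 0]
      filterlim_at_infinity_imp_eventually_ne[OF d_inf, of l]
  proof eventually_elim
    case (elim t)
    define v where "v = d t - l"
    have "v \<noteq> 0"
      using elim by (simp add: v_def)
    have "pi_fn p b d t l * inverse (d t) * (d t / v) + (cmod (b t))\<^sup>2 / (d t)\<^sup>2 * (d t / v)\<^sup>2 =
        (p t - (cmod (b t))\<^sup>2 / v) / v + (cmod (b t))\<^sup>2 / v\<^sup>2"
      using elim(1) by (simp add: pi_fn_def v_def power_divide)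
    also have "\<dots> = p t / v"
      using \<open>v \<noteq> 0\<close> by (simp add: field_simps power2_eq_square)
    finally show ?case
      by (simp only: v_def)
  qed
  ultimately have "((\<lambda>t. p t / (d t - l)) \<longlongrightarrow> P * 0 * 1 + L * 1\<^sup>2) at_top"
    by (rule Lim_transform_eventually)
  then show ?thesis
    by simp
qed

lemma closure_Delta_if_tendsto_pi_fn_0_infinite_dinf:
  assumes inf: "dinf = \<infinity> \<or> dinf = - \<infinity>"
    and bd: "((\<lambda>t. (cmod (b t))\<^sup>2 / (d t)\<^sup>2) \<longlongrightarrow> L) at_top" and "0 < L"
    and P: "((\<lambda>t. pi_fn p b d t l) \<longlongrightarrow> 0) at_top"
  shows "l \<in> Dc"
proof -
  have "((\<lambda>t. inverse (p t / (d t - l))) \<longlongrightarrow> inverse L) at_top"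
    using tendsto_p_div_infinite_dinf[OF inf bd P] \<open>0 < L\<close> by (intro tendsto_inverse) simp_all
  then show ?thesis
    using P inf by (intro closure_Delta_if_tendsto_pi_fn_0 eventually_d_neq) auto
qed

lemma sigma_s_infinite_dinf_pos:
  assumes inf: "dinf = \<infinity> \<or> dinf = - \<infinity>"
    and bd: "((\<lambda>t. (cmod (b t))\<^sup>2 / (d t)\<^sup>2) \<longlongrightarrow> L) at_top" and "0 < L"
  shows "\<exists>sm sp. sm \<le> sp \<and> \<sigma> = {sm..sp} - Dc"
proof -
  obtain l0 P0 where P0: "((\<lambda>t. pi_fn p b d t l0) \<longlongrightarrow> P0) at_top"
    using C1' by blast
  obtain Cc Kr Q0 where "0 \<le> Cc" and \<sigma>_iff: "\<And>l. l \<notin> Dc \<Longrightarrow> P0 + L * (l0 - l) \<noteq> 0 \<Longrightarrow>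
      l \<in> \<sigma> \<longleftrightarrow> 0 \<le> Kr\<^sup>2 - (Q0 - l * (1 + Cc)) * (P0 + L * (l0 - l))"
    by (rule sigma_s_iff_infinite_dinf[OF inf bd P0]) (rule that)
  have P_nonzero: "P0 + L * (l0 - l) \<noteq> 0" if "l \<notin> Dc" for l
    using that tendsto_pi_fn_infinite_dinf[OF inf bd P0, of l]
      closure_Delta_if_tendsto_pi_fn_0_infinite_dinf[OF inf bd \<open>0 < L\<close>, of l] by auto
  define a2 b2 c2 where "a2 = - (1 + Cc) * L" and "b2 = Q0 * L + (1 + Cc) * (P0 + L * l0)"
    and "c2 = Kr\<^sup>2 - Q0 * (P0 + L * l0)"
  have poly: "Kr\<^sup>2 - (Q0 - l * (1 + Cc)) * (P0 + L * (l0 - l)) = a2 * l\<^sup>2 + b2 * l + c2" for l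
    unfolding a2_def b2_def c2_def by (simp add: algebra_simps power2_eq_square)
  have "a2 < 0"
    unfolding a2_def using \<open>0 \<le> Cc\<close> \<open>0 < L\<close> by (simp add: mult_neg_pos)
  have root: "P0 + L * (l0 - (l0 + P0 / L)) = 0"
    using \<open>0 < L\<close> by simp
  have "a2 * (l0 + P0 / L)\<^sup>2 + b2 * (l0 + P0 / L) + c2 = Kr\<^sup>2"
    using poly[of "l0 + P0 / L", unfolded root] by simp
  then have "0 \<le> a2 * (l0 + P0 / L)\<^sup>2 + b2 * (l0 + P0 / L) + c2"
    by simp
  then obtain sm sp where "sm \<le> sp" and set: "{l. 0 \<le> a2 * l\<^sup>2 + b2 * l + c2} = {sm..sp}"
    using nonneg_set_quadratic_neg[OF \<open>a2 < 0\<close>] by blast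
  have "\<sigma> = {l. 0 \<le> a2 * l\<^sup>2 + b2 * l + c2} - (Dc \<union> {l. ereal l = dinf})"
    using \<sigma>_iff P_nonzero poly by (intro sigma_s_eq_nonneg_set) simp
  also have "{l. ereal l = dinf} = {}"
    using inf by auto
  finally show ?thesis
    using \<open>sm \<le> sp\<close> unfolding set by blast
qed

lemma sigma_s_infinite_dinf_zero:
  assumes inf: "dinf = \<infinity> \<or> dinf = - \<infinity>"
    and bd: "((\<lambda>t. (cmod (b t))\<^sup>2 / (d t)\<^sup>2) \<longlongrightarrow> 0) at_top"
    and P0: "((\<lambda>t. pi_fn p b d t l0) \<longlongrightarrow> P0) at_top" "P0 \<noteq> 0"
  obtains s where "\<sigma> = (if 0 < P0 then {s..} else {..s}) - Dc"
proof -
  obtain Cc Kr Q0 where "0 \<le> Cc" and \<sigma>_iff: "\<And>l. l \<notin> Dc \<Longrightarrow> P0 + 0 * (l0 - l) \<noteq> 0 \<Longrightarrow>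
      l \<in> \<sigma> \<longleftrightarrow> 0 \<le> Kr\<^sup>2 - (Q0 - l * (1 + Cc)) * (P0 + 0 * (l0 - l))"
    by (rule sigma_s_iff_infinite_dinf[OF inf bd P0(1)]) (rule that)
  define k m where "k = P0 * (1 + Cc)" and "m = Kr\<^sup>2 - Q0 * P0"
  have "\<sigma> = {l. 0 \<le> k * l + m} - (Dc \<union> {l. ereal l = dinf})"
    using \<sigma>_iff P0(2) by (intro sigma_s_eq_nonneg_set) (simp add: k_def m_def algebra_simps)
  moreover have "k \<noteq> 0" and "0 < k \<longleftrightarrow> 0 < P0"
    using \<open>0 \<le> Cc\<close> P0(2) by (auto simp: k_def zero_less_mult_iff)
  then have "{l. 0 \<le> k * l + m} = (if 0 < P0 then {- m / k..} else {..- m / k})"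
    using nonneg_set_linear[of k m] by simp
  ultimately show ?thesis
    using that inf by auto
qed

text \<open>Eventually d < l, so that pi(t, l) \<ge> p t > 0.\<close>
lemma tendsto_pi_fn_nonneg_minus_infinity:
  assumes minf: "dinf = - \<infinity>" and P: "((\<lambda>t. pi_fn p b d t l) \<longlongrightarrow> P) at_top"
  shows "0 \<le> P"
proof (rule tendsto_lowerbound[OF P _ trivial_limit_at_top_linorder])
  have "\<forall>\<^sub>F t in at_top. ereal (d t) < ereal l"
    using B1 minf by (simp add: tendsto_MInfty)
  then show "\<forall>\<^sub>F t in at_top. 0 \<le> pi_fn p b d t l"
    using eventually_ge_at_top[of 0]
  proof eventually_elim
    case (elim t)
    then have "(cmod (b t))\<^sup>2 / (d t - l) \<le> 0" and "0 < p t"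
      using p_pos by (simp_all add: divide_nonneg_neg)
    then show ?case
      unfolding pi_fn_def by linarith
  qed
qed

lemma sigma_s_shape_finite_dinf:
  assumes dinf: "dinf = ereal D"
  shows "\<exists>sm sp s. sm \<le> sp \<and> sp \<le> s \<and>
    (\<forall>L. (p \<longlongrightarrow> L) at_top \<and> 0 < L \<longrightarrow>
       \<sigma> = ({sm..sp} \<union> {s..}) - (Dc \<union> {l. ereal l = dinf}) \<or> \<sigma> = {s..} - (Dc \<union> {l. ereal l = dinf})) \<and>
    ((p \<longlongrightarrow> 0) at_top \<longrightarrow> \<sigma> = ({..sm} \<union> {sp..}) - (Dc \<union> {l. ereal l = dinf}))"
proof (cases "\<exists>L. (p \<longlongrightarrow> L) at_top \<and> 0 < L")
  case True
  then obtain L where pL: "(p \<longlongrightarrow> L) at_top" and "0 < L"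
    by blast
  then have "\<not> (p \<longlongrightarrow> 0) at_top"
    using tendsto_unique[OF trivial_limit_at_top_linorder _ pL] by force
  obtain sm sp s where "sm \<le> sp" "sp \<le> s"
    and \<sigma>_eq: "\<sigma> = ({sm..sp} \<union> {s..}) - (Dc \<union> {l. ereal l = dinf}) \<or> \<sigma> = {s..} - (Dc \<union> {l. ereal l = dinf})"
    using sigma_s_finite_dinf_pos[OF dinf pL \<open>0 < L\<close>] by blast
  show ?thesis
    by (rule exI[of _ sm], rule exI[of _ sp], rule exI[of _ s])
      (use \<open>sm \<le> sp\<close> \<open>sp \<le> s\<close> \<sigma>_eq \<open>\<not> (p \<longlongrightarrow> 0) at_top\<close> in simp)
next
  case no_pos: False
  show ?thesis
  proof (cases "(p \<longlongrightarrow> 0) at_top")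
    case True
    then obtain sm sp where "sm \<le> sp" and \<sigma>_eq: "\<sigma> = ({..sm} \<union> {sp..}) - (Dc \<union> {l. ereal l = dinf})"
      using sigma_s_finite_dinf_zero[OF dinf] by blast
    show ?thesis
      by (rule exI[of _ sm], rule exI[of _ sp], rule exI[of _ sp]) (use \<open>sm \<le> sp\<close> \<sigma>_eq no_pos in auto)
  next
    case False
    with no_pos show ?thesis
      by (intro exI[of _ 0]) auto
  qed
qed

lemma sigma_s_shape_plus_infinity:
  assumes pinf: "dinf = \<infinity>"
  shows "\<exists>sm sp s. sm \<le> sp \<and> sp \<le> s \<and>
    (\<forall>L. ((\<lambda>t. (cmod (b t))\<^sup>2 / (d t)\<^sup>2) \<longlongrightarrow> L) at_top \<and> 0 < L \<longrightarrow> \<sigma> = {sm..sp} - Dc) \<and>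
    (\<forall>M. ((\<lambda>t. (cmod (b t))\<^sup>2 / (d t)\<^sup>2) \<longlongrightarrow> 0) at_top \<and>
       ((\<lambda>t. p t - (cmod (b t))\<^sup>2 / d t) \<longlongrightarrow> M) at_top \<and> 0 < M \<longrightarrow> \<sigma> = {s..} - Dc) \<and>
    (\<forall>M. ((\<lambda>t. (cmod (b t))\<^sup>2 / (d t)\<^sup>2) \<longlongrightarrow> 0) at_top \<and>
       ((\<lambda>t. p t - (cmod (b t))\<^sup>2 / d t) \<longlongrightarrow> M) at_top \<and> M < 0 \<longrightarrow> \<sigma> = {..s} - Dc)"
proof -
  have inf: "dinf = \<infinity> \<or> dinf = - \<infinity>"
    using pinf by simp
  show ?thesis
  proof (cases "\<exists>L. ((\<lambda>t. (cmod (b t))\<^sup>2 / (d t)\<^sup>2) \<longlongrightarrow> L) at_top \<and> 0 < L")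
    case True
    then obtain L where bd: "((\<lambda>t. (cmod (b t))\<^sup>2 / (d t)\<^sup>2) \<longlongrightarrow> L) at_top" and "0 < L"
      by blast
    have no_zero: "\<not> ((\<lambda>t. (cmod (b t))\<^sup>2 / (d t)\<^sup>2) \<longlongrightarrow> 0) at_top"
      using tendsto_unique[OF trivial_limit_at_top_linorder _ bd] \<open>0 < L\<close> by force
    obtain sm sp where "sm \<le> sp" and \<sigma>_eq: "\<sigma> = {sm..sp} - Dc"
      using sigma_s_infinite_dinf_pos[OF inf bd \<open>0 < L\<close>] by blast
    show ?thesis
      by (rule exI[of _ sm], rule exI[of _ sp], rule exI[of _ sp]) (use \<open>sm \<le> sp\<close> \<sigma>_eq no_zero in simp)
  next
    case no_pos: False
    show ?thesis
    proof (cases "\<exists>M. ((\<lambda>t. (cmod (b t))\<^sup>2 / (d t)\<^sup>2) \<longlongrightarrow> 0) at_top \<and>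
        ((\<lambda>t. p t - (cmod (b t))\<^sup>2 / d t) \<longlongrightarrow> M) at_top \<and> M \<noteq> 0")
      case True
      then obtain M where bd: "((\<lambda>t. (cmod (b t))\<^sup>2 / (d t)\<^sup>2) \<longlongrightarrow> 0) at_top"
        and M: "((\<lambda>t. p t - (cmod (b t))\<^sup>2 / d t) \<longlongrightarrow> M) at_top" "M \<noteq> 0"
        by blast
      have unique: "M' = M" if "((\<lambda>t. p t - (cmod (b t))\<^sup>2 / d t) \<longlongrightarrow> M') at_top" for M'
        using tendsto_unique[OF trivial_limit_at_top_linorder that M(1)] .
      have "((\<lambda>t. pi_fn p b d t 0) \<longlongrightarrow> M) at_top"
        using M(1) by (simp add: pi_fn_def)
      then obtain s where "\<sigma> = (if 0 < M then {s..} else {..s}) - Dc"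
        using sigma_s_infinite_dinf_zero[OF inf bd _ M(2)] by blast
      with no_pos unique show ?thesis
        by (intro exI[of _ s]) auto
    next
      case False
      with no_pos show ?thesis
        by (intro exI[of _ 0]) auto
    qed
  qed
qed

lemma sigma_s_shape_minus_infinity:
  assumes minf: "dinf = - \<infinity>"
  shows "\<exists>sm sp s. sm \<le> sp \<and> sp \<le> s \<and>
    (\<forall>L. ((\<lambda>t. (cmod (b t))\<^sup>2 / (d t)\<^sup>2) \<longlongrightarrow> L) at_top \<and> 0 < L \<longrightarrow> \<sigma> = {sm..sp} - Dc) \<and>
    (((\<lambda>t. (cmod (b t))\<^sup>2 / (d t)\<^sup>2) \<longlongrightarrow> 0) at_top \<longrightarrow> \<sigma> = {s..} - Dc)"
proof -
  have inf: "dinf = \<infinity> \<or> dinf = - \<infinity>"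
    using minf by simp
  show ?thesis
  proof (cases "\<exists>L. ((\<lambda>t. (cmod (b t))\<^sup>2 / (d t)\<^sup>2) \<longlongrightarrow> L) at_top \<and> 0 < L")
    case True
    then obtain L where bd: "((\<lambda>t. (cmod (b t))\<^sup>2 / (d t)\<^sup>2) \<longlongrightarrow> L) at_top" and "0 < L"
      by blast
    have no_zero: "\<not> ((\<lambda>t. (cmod (b t))\<^sup>2 / (d t)\<^sup>2) \<longlongrightarrow> 0) at_top"
      using tendsto_unique[OF trivial_limit_at_top_linorder _ bd] \<open>0 < L\<close> by force
    obtain sm sp where "sm \<le> sp" and \<sigma>_eq: "\<sigma> = {sm..sp} - Dc"
      using sigma_s_infinite_dinf_pos[OF inf bd \<open>0 < L\<close>] by blast
    show ?thesis
      by (rule exI[of _ sm], rule exI[of _ sp], rule exI[of _ sp]) (use \<open>sm \<le> sp\<close> \<sigma>_eq no_zero in simp)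
  next
    case no_pos: False
    show ?thesis
    proof (cases "((\<lambda>t. (cmod (b t))\<^sup>2 / (d t)\<^sup>2) \<longlongrightarrow> 0) at_top")
      case bd: True
      obtain l0 P0 where P0: "((\<lambda>t. pi_fn p b d t l0) \<longlongrightarrow> P0) at_top" "P0 \<noteq> 0"
        using C1' by blast
      then have "0 < P0"
        using tendsto_pi_fn_nonneg_minus_infinity[OF minf P0(1)] by simp
      obtain s where "\<sigma> = (if 0 < P0 then {s..} else {..s}) - Dc"
        using sigma_s_infinite_dinf_zero[OF inf bd P0] by blast
      with no_pos \<open>0 < P0\<close> show ?thesis
        by (intro exI[of _ s]) auto
    next
      case False
      with no_pos show ?thesis
        by (intro exI[of _ 0]) auto
    qed
  qed
qed

end

theorem proposition5p3:
  fixes p d q :: "real \<Rightarrow> real" and b c :: "real \<Rightarrow> complex" and dinf :: ereal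
  assumes p_C2: "C2_on {0..} p" and d_C2: "C2_on {0..} d" and b_C2: "C2_on {0..} b"
    and c_C1: "C1_on {0..} c" and q_cont: "continuous_on {0..} q"
    and p_pos: "\<forall>t\<ge>0. p t > 0"
    and B1: "((\<lambda>t. ereal (d t)) \<longlongrightarrow> dinf) at_top"
    and B2: "\<exists>\<beta>>0. \<exists>\<gamma>>0. \<forall>t\<ge>0. cmod (b t) \<le> \<beta> * (\<bar>d t\<bar> + 1) \<and> cmod (c t) \<le> \<gamma> * (\<bar>d t\<bar> + 1)"
    and C1: "\<forall>l. l \<notin> closure (Delta p b d ` {0..}) \<and> ereal l \<noteq> dinf \<longrightarrow>
               (\<exists>L. ((\<lambda>t. pi_fn p b d t l) \<longlongrightarrow> L) at_top) \<and>
               (\<exists>L. ((\<lambda>t. deriv (\<lambda>s. pi_fn p b d s l) t) \<longlongrightarrow> L) at_top)"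
    and C1': "\<exists>l. l \<notin> closure (Delta p b d ` {0..}) \<and> ereal l \<noteq> dinf \<and>
               (\<exists>L. ((\<lambda>t. pi_fn p b d t l) \<longlongrightarrow> L) at_top \<and> L \<noteq> 0)"
    and C2: "\<forall>l. ereal l \<noteq> dinf \<longrightarrow>
               (\<exists>L. ((\<lambda>t. cnj (b t) * c t / complex_of_real (d t - l)) \<longlongrightarrow> L) at_top) \<and>
               (\<exists>L. ((\<lambda>t. vector_derivative (\<lambda>s. cnj (b s) * c s / complex_of_real (d s - l)) (at t))
                        \<longlongrightarrow> L) at_top)"
    and C3: "\<forall>l. ereal l \<noteq> dinf \<longrightarrow>
               (\<exists>L. ((\<lambda>t. q t - l - (cmod (c t))\<^sup>2 / (d t - l)) \<longlongrightarrow> L) at_top)"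
  shows "\<exists>sm sp s :: real. sm \<le> sp \<and> sp \<le> s \<and>
    (let \<sigma> = sigma_s p q b c d dinf;
         Dc = closure (Delta p b d ` {0..});
         E = Dc \<union> {l. ereal l = dinf}
     in
     ((\<exists>r. dinf = ereal r) \<longrightarrow>
        (\<forall>L. (p \<longlongrightarrow> L) at_top \<and> L > 0 \<longrightarrow>
             \<sigma> = ({sm..sp} \<union> {s..}) - E \<or> \<sigma> = {s..} - E) \<and>
        ((p \<longlongrightarrow> 0) at_top \<longrightarrow> \<sigma> = ({..sm} \<union> {sp..}) - E)) \<and>
     (dinf = \<infinity> \<longrightarrow>
        (\<forall>L. ((\<lambda>t. (cmod (b t))\<^sup>2 / (d t)\<^sup>2) \<longlongrightarrow> L) at_top \<and> L > 0 \<longrightarrow> \<sigma> = {sm..sp} - Dc) \<and>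
        (\<forall>M. ((\<lambda>t. (cmod (b t))\<^sup>2 / (d t)\<^sup>2) \<longlongrightarrow> 0) at_top \<and>
              ((\<lambda>t. p t - (cmod (b t))\<^sup>2 / d t) \<longlongrightarrow> M) at_top \<and> M > 0 \<longrightarrow> \<sigma> = {s..} - Dc) \<and>
        (\<forall>M. ((\<lambda>t. (cmod (b t))\<^sup>2 / (d t)\<^sup>2) \<longlongrightarrow> 0) at_top \<and>
              ((\<lambda>t. p t - (cmod (b t))\<^sup>2 / d t) \<longlongrightarrow> M) at_top \<and> M < 0 \<longrightarrow> \<sigma> = {..s} - Dc)) \<and>
     (dinf = - \<infinity> \<longrightarrow>
        (\<forall>L. ((\<lambda>t. (cmod (b t))\<^sup>2 / (d t)\<^sup>2) \<longlongrightarrow> L) at_top \<and> L > 0 \<longrightarrow> \<sigma> = {sm..sp} - Dc) \<and>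
        (((\<lambda>t. (cmod (b t))\<^sup>2 / (d t)\<^sup>2) \<longlongrightarrow> 0) at_top \<longrightarrow> \<sigma> = {s..} - Dc)))"
proof -
  interpret mixed_order_coefficients p d q b c dinf
    using C2_on_differentiable_at[OF p_C2] C2_on_differentiable_at[OF d_C2]
      C2_on_differentiable_at[OF b_C2] C1_on_differentiable_at[OF c_C1] p_pos B1 C1 C1' C2 C3
    by unfold_locales simp_all
  consider (finite) D where "dinf = ereal D" | (plus_infinity) "dinf = \<infinity>" | (minus_infinity) "dinf = - \<infinity>"
    by (cases dinf) auto
  then show ?thesis
  proof cases
    case finite
    then show ?thesis
      using sigma_s_shape_finite_dinf[OF finite] by (simp add: Let_def)
  next
    case plus_infinity
    then show ?thesis
      using sigma_s_shape_plus_infinity[OF plus_infinity] by (simp add: Let_def)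
  next
    case minus_infinity
    then show ?thesis
      using sigma_s_shape_minus_infinity[OF minus_infinity] by (simp add: Let_def)
  qed
qed

end
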